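(* Let $m,n$ be natural numbers with $\min\{m,n\}\ge4$, let $\{|e_i\rangle\}_{i=0}^{m-1}$ and $\{|f_j\rangle\}_{j=0}^{n-1}$ be the canonical bases of $\mathbb{C}^m$ and $\mathbb{C}^n$, and let $a=3$ or $a>5$ (real). Let $$\mathcal{S}=\mathrm{span}\{|e_{i-2}\rangle\otimes|f_{j+1}\rangle-a|e_{i-1}\rangle\otimes|f_j\rangle+a|e_i\rangle\otimes|f_{j-1}\rangle-|e_{i+1}\rangle\otimes|f_{j-2}\rangle:\ 2\le i\le m-2,\ 2\le j\le n-2\}\subset\mathbb{C}^m\otimes\mathbb{C}^n.$$ Then $\mathcal{S}$ does not contain any non-zero vector of Schmidt rank $\le3$, and $\dim\mathcal{S}=(m-3)(n-3)$.
   Context: The Schmidt rank of $|\psi\rangle=\sum_{i,j}c_{ij}|e_i\rangle\otimes|f_j\rangle\in\mathbb{C}^m\otimes\mathbb{C}^n$ is the minimal number of terms in a decomposition $|\psi\rangle=\sum_{l=1}^r|u_l\rangle\otimes|v_l\rangle$; equivalently, the rank of the matrix $[c_{ij}]$. (The paper presents $\mathcal{S}$ as the direct sum over $3\le d\le m+n-5$ of the spans of the generators with $i+j=d+1$, which is the same subspace.) *)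

theory Defs
  imports Complex_Main "HOL-Library.Function_Algebras"
begin

text \<open>A vector of C^m \<otimes> C^n is represented by its coefficient function
  c :: nat \<Rightarrow> nat \<Rightarrow> complex, c i j being the coefficient of e_i \<otimes> f_j
  (only the values for i < m, j < n are meaningful; all vectors considered
  here vanish outside that box).\<close>

type_synonym tensor = "nat \<Rightarrow> nat \<Rightarrow> complex"

definition tscale :: "complex \<Rightarrow> tensor \<Rightarrow> tensor" where
  "tscale c \<psi> = (\<lambda>i j. c * \<psi> i j)"

lemma vector_space_tscale: "vector_space tscale"
  by unfold_locales (auto simp: tscale_def algebra_simps fun_eq_iff)

abbreviation tspan :: "tensor set \<Rightarrow> tensor set" where
  "tspan \<equiv> module.span tscale"

abbreviation tdim :: "tensor set \<Rightarrow> nat" where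
  "tdim \<equiv> vector_space.dim tscale"

definition basis_tensor :: "nat \<Rightarrow> nat \<Rightarrow> tensor" where
  "basis_tensor p q = (\<lambda>i j. if i = p \<and> j = q then 1 else 0)"

definition schmidt_rank :: "nat \<Rightarrow> nat \<Rightarrow> tensor \<Rightarrow> nat" where
  "schmidt_rank m n \<psi> = (LEAST r. \<exists>u v :: nat \<Rightarrow> nat \<Rightarrow> complex.
      \<forall>i<m. \<forall>j<n. \<psi> i j = (\<Sum>l<r. u l i * v l j))"

definition gen5 :: "real \<Rightarrow> nat \<Rightarrow> nat \<Rightarrow> tensor" where
  "gen5 a i j = basis_tensor (i-2) (j+1) - tscale (complex_of_real a) (basis_tensor (i-1) j)
     + tscale (complex_of_real a) (basis_tensor i (j-1)) - basis_tensor (i+1) (j-2)"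

definition S5 :: "nat \<Rightarrow> nat \<Rightarrow> real \<Rightarrow> tensor set" where
  "S5 m n a = tspan {gen5 a i j | i j. 2 \<le> i \<and> i \<le> m - 2 \<and> 2 \<le> j \<and> j \<le> n - 2}"

end

theory Submission
  imports Defs "HOL-Computational_Algebra.Polynomial"
begin

text \<open>Write \<open>\<psi> = \<Sum> L i j \<cdot> gen5 a i j\<close> and let \<open>D\<close> be the smallest \<open>i + j\<close> with
  \<open>L i j \<noteq> 0\<close>. Below the antidiagonal \<open>x + y = D - 1\<close> the tensor \<open>\<psi>\<close> vanishes, and on it
  \<open>\<psi>\<close> is the coefficient sequence of \<open>\<rho>(t) (1 - a t + a t\<^sup>2 - t\<^sup>3)\<close>, where \<open>\<rho> \<noteq> 0\<close>
  lists the antidiagonal \<open>i + j = D\<close> of \<open>L\<close>. The cubic equals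
  \<open>(1 - t) (t\<^sup>2 - (a - 1) t + 1)\<close>: for \<open>a > 3\<close> it has three distinct positive roots, for
  \<open>a = 3\<close> a triple root at 1. A nonzero polynomial with at most three monomials can vanish
  at neither (Rolle's theorem, resp. a Vandermonde system), so that antidiagonal of \<open>\<psi>\<close> has
  at least four nonzero entries. They are the diagonal of a triangular submatrix of \<open>\<psi>\<close>,
  whence Schmidt rank at least four; in particular \<open>\<psi> \<noteq> 0\<close> for \<open>L \<noteq> 0\<close>, so the generators
  are independent and the dimension is their number.\<close>

section \<open>Polynomials with at most three monomials\<close>

lemma card_le_3_subset_three:
  fixes Z :: "nat set"
  assumes "finite Z" "card Z \<le> 3"
  obtains p q s where "p < q" "q < s" "Z \<subseteq> {p, q, s}"
proof -
  define B where "B = Max (insert 0 Z)"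
  define xs where "xs = sorted_list_of_set Z @ [B + 1, B + 2, B + 3]"
  have "x < B + 1" if "x \<in> Z" for x
    using assms that by (simp add: B_def le_imp_less_Suc)
  then have sorted: "sorted_wrt (<) xs"
    using assms by (force simp: xs_def sorted_wrt_append)
  have "Z \<subseteq> {xs ! 0, xs ! 1, xs ! 2}"
  proof
    fix x assume "x \<in> Z"
    then obtain i where "i < card Z" "sorted_list_of_set Z ! i = x"
      using assms(1) by (metis in_set_conv_nth length_sorted_list_of_set set_sorted_list_of_set)
    moreover from this have "i = 0 \<or> i = 1 \<or> i = 2"
      using assms(2) by auto
    ultimately show "x \<in> {xs ! 0, xs ! 1, xs ! 2}"
      by (auto simp: xs_def nth_append)
  qed
  moreover have "xs ! 0 < xs ! 1" "xs ! 1 < xs ! 2"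
    using sorted by (auto simp: sorted_wrt_iff_nth_less xs_def)
  ultimately show ?thesis
    using that by blast
qed

lemma vandermonde3_eq_0:
  fixes \<alpha> \<beta> \<gamma> x y z :: "'a :: field"
  assumes "x \<noteq> y" "y \<noteq> z" "x \<noteq> z"
    and "\<alpha> + \<beta> + \<gamma> = 0"
    and "\<alpha> * x + \<beta> * y + \<gamma> * z = 0"
    and "\<alpha> * x\<^sup>2 + \<beta> * y\<^sup>2 + \<gamma> * z\<^sup>2 = 0"
  shows "\<alpha> = 0 \<and> \<beta> = 0 \<and> \<gamma> = 0"
proof -
  have "\<gamma> * ((z - x) * (z - y)) = (\<alpha> * x\<^sup>2 + \<beta> * y\<^sup>2 + \<gamma> * z\<^sup>2)
      - (x + y) * (\<alpha> * x + \<beta> * y + \<gamma> * z) + x * y * (\<alpha> + \<beta> + \<gamma>)"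
    by (simp add: algebra_simps power2_eq_square)
  moreover have "\<beta> * ((y - x) * (y - z)) = (\<alpha> * x\<^sup>2 + \<beta> * y\<^sup>2 + \<gamma> * z\<^sup>2)
      - (x + z) * (\<alpha> * x + \<beta> * y + \<gamma> * z) + x * z * (\<alpha> + \<beta> + \<gamma>)"
    by (simp add: algebra_simps power2_eq_square)
  ultimately have "\<gamma> = 0" "\<beta> = 0"
    using assms by auto
  then show ?thesis
    using assms(4) by simp
qed

lemma linear_power_dvd_pderiv:
  fixes p :: "'a :: idom poly"
  assumes "[:-c, 1:] ^ Suc k dvd p"
  shows "[:-c, 1:] ^ k dvd pderiv p"
proof -
  obtain h where "p = [:-c, 1:] ^ Suc k * h"
    using assms by blast
  then have "pderiv p = [:-c, 1:] ^ Suc k * pderiv h + smult (of_nat (Suc k)) (h * [:-c, 1:] ^ k)"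
    by (simp only: lemma_order_pderiv1)
  moreover have "[:-c, 1:] ^ k dvd [:-c, 1:] ^ Suc k * pderiv h"
    by (intro dvd_mult2 le_imp_power_dvd) simp
  ultimately show ?thesis
    by (simp add: dvd_smult)
qed

lemma trinomial_eq_0_if_triple_root_1:
  fixes \<alpha> \<beta> \<gamma> :: "'a :: field_char_0"
  assumes "p < q" "q < s"
    and "[:-1, 1:] ^ 3 dvd monom \<alpha> p + monom \<beta> q + monom \<gamma> s" (is "_ dvd ?g")
  shows "\<alpha> = 0 \<and> \<beta> = 0 \<and> \<gamma> = 0"
proof -
  have "[:-1, 1:] ^ 2 dvd pderiv ?g"
    using linear_power_dvd_pderiv[of 1 2 ?g] assms(3) by simp
  then have "[:-1, 1:] dvd pderiv (pderiv ?g)"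
    by (rule linear_power_dvd_pderiv[of 1 1, unfolded Suc_1 power_one_right])
  moreover have "[:-1, 1:] dvd pderiv ?g"
    using \<open>[:-1, 1:] ^ 2 dvd pderiv ?g\<close> by (rule dvd_trans[rotated]) simp
  moreover have "[:-1, 1:] dvd ?g"
    using assms(3) by (rule dvd_trans[rotated]) simp
  ultimately have roots: "poly ?g 1 = 0" "poly (pderiv ?g) 1 = 0" "poly (pderiv (pderiv ?g)) 1 = 0"
    by (simp_all only: poly_eq_0_iff_dvd)
  have "(of_nat k :: 'a)\<^sup>2 = of_nat k * of_nat (k - 1) + of_nat k" for k
    by (cases k) (simp_all add: power2_eq_square algebra_simps)
  then have "\<alpha> * (of_nat p)\<^sup>2 + \<beta> * (of_nat q)\<^sup>2 + \<gamma> * (of_nat s)\<^sup>2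
      = poly (pderiv (pderiv ?g)) 1 + poly (pderiv ?g) 1"
    by (simp add: pderiv_add pderiv_monom poly_monom algebra_simps)
  moreover have "poly ?g 1 = \<alpha> + \<beta> + \<gamma>"
    by (simp add: poly_monom)
  moreover have "poly (pderiv ?g) 1 = \<alpha> * of_nat p + \<beta> * of_nat q + \<gamma> * of_nat s"
    by (simp add: pderiv_add pderiv_monom poly_monom mult.commute)
  ultimately show ?thesis
    using assms(1,2) roots by (intro vandermonde3_eq_0) auto
qed

lemma binomial_eq_0_if_two_positive_roots:
  fixes \<beta> \<gamma> z1 z2 :: real
  assumes "0 < k" "0 < z1" "z1 < z2" "\<beta> + \<gamma> * z1 ^ k = 0" "\<beta> + \<gamma> * z2 ^ k = 0"
  shows "\<beta> = 0 \<and> \<gamma> = 0"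
proof -
  have "z1 ^ k < z2 ^ k"
    using assms by (intro power_strict_mono) auto
  moreover have "\<gamma> * z1 ^ k = \<gamma> * z2 ^ k"
    using assms(4,5) by linarith
  ultimately have "\<gamma> = 0"
    by simp
  then show ?thesis
    using assms(4) by simp
qed

lemma real_trinomial_eq_0_if_three_positive_roots:
  fixes \<alpha> \<beta> \<gamma> t0 t1 t2 :: real
  assumes "p < q" "q < s" "0 < t0" "t0 < t1" "t1 < t2"
    and roots: "\<And>t. t \<in> {t0, t1, t2} \<Longrightarrow> \<alpha> * t ^ p + \<beta> * t ^ q + \<gamma> * t ^ s = 0"
  shows "\<alpha> = 0 \<and> \<beta> = 0 \<and> \<gamma> = 0"
proof -
  define u w where "u = q - p" and "w = s - p"
  have "0 < u" "u < w"
    using assms(1,2) by (auto simp: u_def w_def)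
  define h where "h = [:\<alpha>:] + monom \<beta> u + monom \<gamma> w"
  have h_roots: "poly h t = 0" if "t \<in> {t0, t1, t2}" for t
  proof -
    have "\<alpha> * t ^ p + \<beta> * t ^ q + \<gamma> * t ^ s = t ^ p * poly h t"
      using assms(1,2) by (simp add: h_def poly_monom u_def w_def algebra_simps flip: power_add)
    moreover have "0 < t"
      using that assms(3-5) by auto
    ultimately show ?thesis
      using roots[OF that] by simp
  qed
  have "poly (pderiv h) z = z ^ (u - 1) * (of_nat u * \<beta> + of_nat w * \<gamma> * z ^ (w - u))" for z
    using \<open>0 < u\<close> \<open>u < w\<close>
    by (simp add: h_def pderiv_add pderiv_monom poly_monom algebra_simps flip: power_add)
  moreover obtain z1 z2 where "t0 < z1" "z1 < t1" "t1 < z2"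
    and "poly (pderiv h) z1 = 0" "poly (pderiv h) z2 = 0"
    using poly_MVT[OF \<open>t0 < t1\<close>, of h] poly_MVT[OF \<open>t1 < t2\<close>, of h] h_roots by auto
  ultimately have "of_nat u * \<beta> = 0 \<and> of_nat w * \<gamma> = 0"
    using assms(3) \<open>u < w\<close>
    by (intro binomial_eq_0_if_two_positive_roots[of "w - u" z1 z2]) auto
  then have "\<beta> = 0" "\<gamma> = 0"
    using \<open>0 < u\<close> \<open>u < w\<close> by auto
  then show ?thesis
    using h_roots[of t0] by (simp add: h_def)
qed

lemma trinomial_eq_0_if_three_positive_roots:
  fixes \<alpha> \<beta> \<gamma> :: complex and t0 t1 t2 :: real
  assumes "p < q" "q < s" "0 < t0" "t0 < t1" "t1 < t2"
    and roots: "\<And>t. t \<in> {t0, t1, t2} \<Longrightarrow> poly (monom \<alpha> p + monom \<beta> q + monom \<gamma> s) (of_real t) = 0"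
  shows "\<alpha> = 0 \<and> \<beta> = 0 \<and> \<gamma> = 0"
proof -
  have "Re \<alpha> * t ^ p + Re \<beta> * t ^ q + Re \<gamma> * t ^ s = 0"
    and "Im \<alpha> * t ^ p + Im \<beta> * t ^ q + Im \<gamma> * t ^ s = 0" if "t \<in> {t0, t1, t2}" for t
    using arg_cong[OF roots[OF that], of Re] arg_cong[OF roots[OF that], of Im]
    by (simp_all add: poly_monom flip: of_real_power)
  then have "Re \<alpha> = 0 \<and> Re \<beta> = 0 \<and> Re \<gamma> = 0" "Im \<alpha> = 0 \<and> Im \<beta> = 0 \<and> Im \<gamma> = 0"
    using real_trinomial_eq_0_if_three_positive_roots[OF assms(1-5)] by blast+
  then show ?thesis
    by (simp add: complex_eq_iff)
qed

text \<open>Each generator carries the entries \<open>1, -a, a, -1\<close> along an antidiagonal.\<close>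
definition gen5_cubic :: "real \<Rightarrow> complex poly" where
  "gen5_cubic a = [:1, - of_real a, of_real a, -1:]"

lemma card_nonzero_coeffs_mult_gen5_cubic:
  assumes "3 \<le> a" "r \<noteq> 0"
  shows "3 < card {k. coeff (r * gen5_cubic a) k \<noteq> 0}"
proof (rule ccontr)
  define g where "g = r * gen5_cubic a"
  assume "\<not> 3 < card {k. coeff (r * gen5_cubic a) k \<noteq> 0}"
  then have "card {k. coeff g k \<noteq> 0} \<le> 3"
    by (simp add: g_def)
  moreover have "finite {k. coeff g k \<noteq> 0}"
    by (rule finite_subset[of _ "{..degree g}"]) (auto intro: le_degree)
  ultimately obtain p q s where "p < q" "q < s" and support: "{k. coeff g k \<noteq> 0} \<subseteq> {p, q, s}"
    using card_le_3_subset_three by blast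
  have g_eq: "g = monom (coeff g p) p + monom (coeff g q) q + monom (coeff g s) s"
    using \<open>p < q\<close> \<open>q < s\<close> support by (intro poly_eqI) auto
  have "coeff g p = 0 \<and> coeff g q = 0 \<and> coeff g s = 0"
  proof (cases "a = 3")
    case True
    then have "gen5_cubic a = - ([:-1, 1:] ^ 3)"
      by (simp add: gen5_cubic_def numeral_3_eq_3)
    then have "[:-1, 1:] ^ 3 dvd g"
      by (simp add: g_def)
    then show ?thesis
      using \<open>p < q\<close> \<open>q < s\<close> g_eq by (metis trinomial_eq_0_if_triple_root_1)
  next
    case False
    with assms(1) have "3 < a"
      by simp
    define \<delta> where "\<delta> = sqrt ((a - 1)\<^sup>2 - 4)"
    define t2 where "t2 = ((a - 1) + \<delta>) / 2"
    have "(a - 1)\<^sup>2 - 4 = (a - 3) * (a + 1)"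
      by (simp add: power2_eq_square algebra_simps)
    then have "0 \<le> (a - 1)\<^sup>2 - 4"
      using \<open>3 < a\<close> by simp
    then have disc: "\<delta>\<^sup>2 = (a - 1)\<^sup>2 - 4" and "0 \<le> \<delta>"
      by (simp_all add: \<delta>_def)
    then have "1 < t2"
      using \<open>3 < a\<close> by (simp add: t2_def)
    have t2_root: "t2\<^sup>2 - (a - 1) * t2 + 1 = 0"
      using disc by (simp add: t2_def power2_eq_square field_simps)
    \<comment> \<open>The quadratic factor is palindromic, so \<open>1 / t2\<close> is its other root.\<close>
    have t1_root: "(1 / t2)\<^sup>2 - (a - 1) * (1 / t2) + 1 = 0"
      using t2_root \<open>1 < t2\<close> by (simp add: power2_eq_square field_simps)
    define cubic where "cubic t = (1 - t) * (t\<^sup>2 - (a - 1) * t + 1)" for t :: real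
    have "poly (gen5_cubic a) (of_real t) = of_real (cubic t)" for t
      by (simp add: gen5_cubic_def cubic_def power2_eq_square algebra_simps)
    moreover have "cubic t = 0" if "t \<in> {1 / t2, 1, t2}" for t
      using that t1_root t2_root by (auto simp: cubic_def)
    ultimately have "poly g (of_real t) = 0" if "t \<in> {1 / t2, 1, t2}" for t
      using that by (simp add: g_def)
    then show ?thesis
      using \<open>p < q\<close> \<open>q < s\<close> \<open>1 < t2\<close> g_eq
      by (intro trinomial_eq_0_if_three_positive_roots[of p q s "1 / t2" 1 t2]) auto
  qed
  then have "g = 0"
    by (subst g_eq) simp
  moreover have "gen5_cubic a \<noteq> 0"
    by (simp add: gen5_cubic_def)
  ultimately show False
    using assms(2) by (simp add: g_def)
qed

lemma coeff_mult_cubic: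
  "coeff (p * [:c0, c1, c2, c3:]) (n + 3)
     = c0 * coeff p (n + 3) + c1 * coeff p (n + 2) + c2 * coeff p (n + 1) + c3 * coeff p n"
  by (simp add: numeral_3_eq_3 numeral_2_eq_2 algebra_simps)

section \<open>Linear combinations of the generators\<close>

definition tsupport :: "tensor \<Rightarrow> (nat \<times> nat) set" where
  "tsupport L = {(i, j). L i j \<noteq> 0}"

lemma tsupport_subset_eq_0: "tsupport L \<subseteq> A \<Longrightarrow> (i, j) \<notin> A \<Longrightarrow> L i j = 0"
  by (auto simp: tsupport_def)

lemma sum_tensor_apply: "(\<Sum>k\<in>K. f k :: tensor) i j = (\<Sum>k\<in>K. f k i j)"
  by (induction K rule: infinite_finite_induct) auto

definition gen5_index :: "nat \<Rightarrow> nat \<Rightarrow> (nat \<times> nat) set" where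
  "gen5_index m n = {2..m - 2} \<times> {2..n - 2}"

lemma gen5_index_subset: "gen5_index m n \<subseteq> {2..} \<times> {2..}"
  by (auto simp: gen5_index_def)

lemma finite_gen5_index [simp]: "finite (gen5_index m n)"
  by (simp add: gen5_index_def)

text \<open>The tensor \<open>\<Sum> L i j \<cdot> gen5 a i j\<close>, read off coordinatewise; the truncated
  subtractions are harmless as long as \<open>L\<close> vanishes on the rows and columns 0 and 1.\<close>
definition gen5_comb :: "real \<Rightarrow> tensor \<Rightarrow> tensor" where
  "gen5_comb a L = (\<lambda>x y. L (x + 2) (y - 1) - of_real a * L (x + 1) y
     + of_real a * L x (y + 1) - L (x - 1) (y + 2))"

lemma gen5_comb_0 [simp]: "gen5_comb a 0 = 0"
  by (simp add: gen5_comb_def fun_eq_iff)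

lemma gen5_comb_diff: "gen5_comb a (L - L') = gen5_comb a L - gen5_comb a L'"
  by (simp add: gen5_comb_def fun_eq_iff algebra_simps)

lemma gen5_eq_gen5_comb:
  assumes "2 \<le> i" "2 \<le> j"
  shows "gen5 a i j = gen5_comb a (basis_tensor i j)"
proof (intro ext)
  fix x y
  have "(x = i - 2 \<and> y = j + 1) \<longleftrightarrow> (x + 2 = i \<and> y - 1 = j)"
    and "(x = i + 1 \<and> y = j - 2) \<longleftrightarrow> (x - 1 = i \<and> y + 2 = j)"
    and "(x = i - 1 \<and> y = j) \<longleftrightarrow> (x + 1 = i \<and> y = j)"
    and "(x = i \<and> y = j - 1) \<longleftrightarrow> (x = i \<and> y + 1 = j)"
    using assms by auto
  then show "gen5 a i j x y = gen5_comb a (basis_tensor i j) x y"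
    by (simp add: gen5_def gen5_comb_def basis_tensor_def tscale_def)
qed

lemma sum_basis_tensor:
  assumes "finite K" "tsupport L \<subseteq> K"
  shows "(\<Sum>(i, j)\<in>K. L i j * basis_tensor i j x y) = L x y"
proof -
  have "(\<Sum>(i, j)\<in>K. L i j * basis_tensor i j x y) = (\<Sum>k\<in>K. if k = (x, y) then L x y else 0)"
    by (intro sum.cong) (auto simp: basis_tensor_def split: if_splits)
  also have "\<dots> = L x y"
    using assms by (auto simp: tsupport_def)
  finally show ?thesis .
qed

lemma sum_gen5_eq_gen5_comb:
  assumes "finite K" "K \<subseteq> {2..} \<times> {2..}" "tsupport L \<subseteq> K"
  shows "(\<Sum>(i, j)\<in>K. tscale (L i j) (gen5 a i j)) = gen5_comb a L"
proof (intro ext)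
  fix x y
  have "(\<Sum>(i, j)\<in>K. tscale (L i j) (gen5 a i j)) x y
      = (\<Sum>(i, j)\<in>K. L i j * gen5_comb a (basis_tensor i j) x y)"
    using assms(2) by (auto simp: sum_tensor_apply tscale_def gen5_eq_gen5_comb intro!: sum.cong)
  also have "\<dots> = (\<Sum>(i, j)\<in>K. L i j * basis_tensor i j (x + 2) (y - 1))
      - of_real a * (\<Sum>(i, j)\<in>K. L i j * basis_tensor i j (x + 1) y)
      + of_real a * (\<Sum>(i, j)\<in>K. L i j * basis_tensor i j x (y + 1))
      - (\<Sum>(i, j)\<in>K. L i j * basis_tensor i j (x - 1) (y + 2))"
    by (simp add: gen5_comb_def sum_subtractf sum.distrib sum_distrib_left split_def algebra_simps)
  also have "\<dots> = gen5_comb a L x y"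
    by (simp only: sum_basis_tensor[OF assms(1,3)] gen5_comb_def)
  finally show "(\<Sum>(i, j)\<in>K. tscale (L i j) (gen5 a i j)) x y = gen5_comb a L x y" .
qed

section \<open>The lowest antidiagonal of a combination\<close>

text \<open>The antidiagonal \<open>i + j = D\<close> of \<open>L\<close>, indexed by \<open>i + 1\<close>: then the antidiagonal
  \<open>x + y = D - 1\<close> of \<open>gen5_comb a L\<close> is the coefficient sequence, from degree 3 on, of its
  product with \<open>gen5_cubic a\<close>.\<close>
definition antidiagonal_poly :: "tensor \<Rightarrow> nat \<Rightarrow> complex poly" where
  "antidiagonal_poly L D = Abs_poly (\<lambda>k. L (k - 1) (D + 1 - k))"

lemma coeff_antidiagonal_poly:
  assumes "tsupport L \<subseteq> {2..} \<times> {2..}"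
  shows "coeff (antidiagonal_poly L D) k = L (k - 1) (D + 1 - k)"
  unfolding antidiagonal_poly_def
  by (subst coeff_Abs_poly[of D]) (auto intro: tsupport_subset_eq_0[OF assms])

lemma gen5_comb_eq_coeff_antidiagonal_poly:
  assumes "tsupport L \<subseteq> {2..} \<times> {2..}" "x + y + 1 = D"
  shows "gen5_comb a L x y = coeff (antidiagonal_poly L D * gen5_cubic a) (x + 3)"
proof -
  have "coeff (antidiagonal_poly L D * gen5_cubic a) (x + 3)
      = coeff (antidiagonal_poly L D) (x + 3) - of_real a * coeff (antidiagonal_poly L D) (x + 2)
        + of_real a * coeff (antidiagonal_poly L D) (x + 1) - coeff (antidiagonal_poly L D) x"
    unfolding gen5_cubic_def coeff_mult_cubic by simp
  also have "\<dots> = gen5_comb a L x y"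
    unfolding coeff_antidiagonal_poly[OF assms(1)] gen5_comb_def assms(2)[symmetric] by simp
  finally show ?thesis ..
qed

lemma nonzero_coeff_antidiagonal_poly_mult:
  assumes "tsupport L \<subseteq> {2..} \<times> {2..}" "0 < D"
    and "coeff (antidiagonal_poly L D * gen5_cubic a) k \<noteq> 0"
  shows "3 \<le> k \<and> k \<le> D + 2"
proof
  show "3 \<le> k"
  proof (rule ccontr)
    assume "\<not> 3 \<le> k"
    then have "coeff (antidiagonal_poly L D) i = 0" if "i \<le> k" for i
      using that by (auto simp: coeff_antidiagonal_poly[OF assms(1)] intro: tsupport_subset_eq_0[OF assms(1)])
    then show False
      using assms(3) by (simp add: coeff_mult)
  qed
  have "degree (antidiagonal_poly L D) \<le> D - 1"
    by (intro degree_le) (auto simp: coeff_antidiagonal_poly[OF assms(1)] intro: tsupport_subset_eq_0[OF assms(1)])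
  then have "degree (antidiagonal_poly L D * gen5_cubic a) \<le> D + 2"
    using degree_mult_le[of "antidiagonal_poly L D" "gen5_cubic a"] assms(2)
    by (simp add: gen5_cubic_def)
  then show "k \<le> D + 2"
    using assms(3) le_degree by fastforce
qed

lemma card_nonzero_coeffs_le_antidiagonal:
  assumes "tsupport L \<subseteq> {2..} \<times> {2..}" "0 < D"
  shows "card {k. coeff (antidiagonal_poly L D * gen5_cubic a) k \<noteq> 0}
    \<le> card {x. x \<le> D - 1 \<and> gen5_comb a L x (D - 1 - x) \<noteq> 0}"
proof -
  let ?A = "{x. x \<le> D - 1 \<and> gen5_comb a L x (D - 1 - x) \<noteq> 0}"
  have "{k. coeff (antidiagonal_poly L D * gen5_cubic a) k \<noteq> 0} \<subseteq> (\<lambda>x. x + 3) ` ?A"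
  proof
    fix k assume k: "k \<in> {k. coeff (antidiagonal_poly L D * gen5_cubic a) k \<noteq> 0}"
    then have "3 \<le> k" "k \<le> D + 2"
      using nonzero_coeff_antidiagonal_poly_mult[OF assms] by auto
    then have "gen5_comb a L (k - 3) (D - 1 - (k - 3)) = coeff (antidiagonal_poly L D * gen5_cubic a) k"
      using gen5_comb_eq_coeff_antidiagonal_poly[OF assms(1), of "k - 3" "D - 1 - (k - 3)" D] assms(2)
      by simp
    then show "k \<in> (\<lambda>x. x + 3) ` ?A"
      using k \<open>3 \<le> k\<close> \<open>k \<le> D + 2\<close> by (intro image_eqI[of k _ "k - 3"]) auto
  qed
  then have "card {k. coeff (antidiagonal_poly L D * gen5_cubic a) k \<noteq> 0} \<le> card ((\<lambda>x. x + 3) ` ?A)"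
    by (intro card_mono) auto
  also have "\<dots> \<le> card ?A"
    by (rule card_image_le) simp
  finally show ?thesis .
qed

lemma gen5_comb_antidiagonal:
  assumes "3 \<le> a" "finite (tsupport L)" "tsupport L \<subseteq> {2..} \<times> {2..}" "L \<noteq> 0"
  obtains d where "\<And>x y. x + y < d \<Longrightarrow> gen5_comb a L x y = 0"
    and "3 < card {x. x \<le> d \<and> gen5_comb a L x (d - x) \<noteq> 0}"
proof -
  define D where "D = Min ((\<lambda>(i, j). i + j) ` tsupport L)"
  have "tsupport L \<noteq> {}"
    using assms(4) by (auto simp: tsupport_def fun_eq_iff)
  then have "D \<in> (\<lambda>(i, j). i + j) ` tsupport L"
    unfolding D_def using assms(2) by (intro Min_in) auto
  then obtain i0 j0 where "L i0 j0 \<noteq> 0" "i0 + j0 = D"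
    by (auto simp: tsupport_def)
  have "D \<le> i + j" if "L i j \<noteq> 0" for i j
    unfolding D_def using assms(2) that by (intro Min_le) (auto simp: tsupport_def)
  moreover have "2 \<le> i \<and> 2 \<le> j" if "L i j \<noteq> 0" for i j
    using assms(3) that by (auto simp: tsupport_def)
  ultimately have L_eq_0: "L i j = 0" if "i < 2 \<or> j < 2 \<or> i + j < D" for i j
    using that by force
  have below: "gen5_comb a L x y = 0" if "x + y < D - 1" for x y
  proof -
    have "L (x + 2) (y - 1) = 0" "L (x + 1) y = 0" "L x (y + 1) = 0" "L (x - 1) (y + 2) = 0"
      using that by (intro L_eq_0; arith)+
    then show ?thesis
      by (simp add: gen5_comb_def)
  qed
  have "antidiagonal_poly L D \<noteq> 0"
    using coeff_antidiagonal_poly[OF assms(3), of D "i0 + 1"] \<open>L i0 j0 \<noteq> 0\<close> \<open>i0 + j0 = D\<close>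
    by (auto simp: Suc_diff_le)
  then have "3 < card {k. coeff (antidiagonal_poly L D * gen5_cubic a) k \<noteq> 0}"
    by (rule card_nonzero_coeffs_mult_gen5_cubic[OF assms(1)])
  moreover have "0 < D"
    using L_eq_0[of i0 j0] \<open>L i0 j0 \<noteq> 0\<close> \<open>i0 + j0 = D\<close> by linarith
  then have "card {k. coeff (antidiagonal_poly L D * gen5_cubic a) k \<noteq> 0}
      \<le> card {x. x \<le> D - 1 \<and> gen5_comb a L x (D - 1 - x) \<noteq> 0}"
    by (rule card_nonzero_coeffs_le_antidiagonal[OF assms(3)])
  ultimately have "3 < card {x. x \<le> D - 1 \<and> gen5_comb a L x (D - 1 - x) \<noteq> 0}"
    by linarith
  then show ?thesis
    using that[of "D - 1"] below by blast
qed

lemma gen5_comb_eq_0_imp: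
  assumes "3 \<le> a" "finite (tsupport L)" "tsupport L \<subseteq> {2..} \<times> {2..}" "gen5_comb a L = 0"
  shows "L = 0"
proof (rule ccontr)
  assume "L \<noteq> 0"
  then obtain d where "3 < card {x. x \<le> d \<and> gen5_comb a L x (d - x) \<noteq> 0}"
    using gen5_comb_antidiagonal[OF assms(1-3)] by blast
  then show False
    using assms(4) by simp
qed

section \<open>The span and its dimension\<close>

lemma inj_on_gen5:
  assumes "3 \<le> a"
  shows "inj_on (\<lambda>(i, j). gen5 a i j) ({2..} \<times> {2..})"
proof (intro inj_onI, clarify)
  fix i j i' j' :: nat
  assume "2 \<le> i" "2 \<le> j" "2 \<le> i'" "2 \<le> j'" and eq: "gen5 a i j = gen5 a i' j'"
  define L where "L = basis_tensor i j - basis_tensor i' j'"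
  have "gen5_comb a L = gen5 a i j - gen5 a i' j'"
    unfolding L_def gen5_comb_diff
    using \<open>2 \<le> i\<close> \<open>2 \<le> j\<close> \<open>2 \<le> i'\<close> \<open>2 \<le> j'\<close> by (simp only: gen5_eq_gen5_comb)
  have supp: "tsupport L \<subseteq> {(i, j), (i', j')}"
    by (auto simp: L_def tsupport_def basis_tensor_def)
  then have "finite (tsupport L)"
    by (rule finite_subset) simp
  moreover have "tsupport L \<subseteq> {2..} \<times> {2..}"
    using supp \<open>2 \<le> i\<close> \<open>2 \<le> j\<close> \<open>2 \<le> i'\<close> \<open>2 \<le> j'\<close> by auto
  moreover have "gen5_comb a L = 0"
    using \<open>gen5_comb a L = gen5 a i j - gen5 a i' j'\<close> eq by simp
  ultimately have "L = 0"
    by (rule gen5_comb_eq_0_imp[OF assms])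
  then have "basis_tensor i' j' i j = basis_tensor i j i j"
    by (simp add: L_def)
  then show "i = i' \<and> j = j'"
    by (simp add: basis_tensor_def split: if_splits)
qed

lemma sum_gen5_image:
  assumes "3 \<le> a"
  shows "(\<Sum>v\<in>(\<lambda>(i, j). gen5 a i j) ` gen5_index m n. tscale (u v) v)
    = gen5_comb a (\<lambda>i j. if (i, j) \<in> gen5_index m n then u (gen5 a i j) else 0)"
    (is "_ = gen5_comb a ?L")
proof -
  have "inj_on (\<lambda>(i, j). gen5 a i j) (gen5_index m n)"
    using inj_on_gen5[OF assms] gen5_index_subset by (rule inj_on_subset)
  then have "(\<Sum>v\<in>(\<lambda>(i, j). gen5 a i j) ` gen5_index m n. tscale (u v) v)
      = (\<Sum>(i, j)\<in>gen5_index m n. tscale (?L i j) (gen5 a i j))"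
    by (subst sum.reindex) (auto intro!: sum.cong)
  also have "\<dots> = gen5_comb a ?L"
    by (rule sum_gen5_eq_gen5_comb) (auto simp: gen5_index_def tsupport_def)
  finally show ?thesis .
qed

lemma S5_eq_span_image:
  "S5 m n a = tspan ((\<lambda>(i, j). gen5 a i j) ` gen5_index m n)"
proof -
  have "{gen5 a i j | i j. 2 \<le> i \<and> i \<le> m - 2 \<and> 2 \<le> j \<and> j \<le> n - 2}
      = (\<lambda>(i, j). gen5 a i j) ` gen5_index m n"
    by (auto simp: gen5_index_def image_iff) blast
  then show ?thesis
    by (simp add: S5_def)
qed

lemma S5_eq_image_gen5_comb:
  assumes "3 \<le> a"
  shows "S5 m n a = gen5_comb a ` {L. tsupport L \<subseteq> gen5_index m n}"
proof -
  interpret vector_space tscale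
    by (rule vector_space_tscale)
  show ?thesis
  proof (intro equalityI subsetI)
    fix \<psi> assume "\<psi> \<in> S5 m n a"
    then obtain u where "\<psi> = (\<Sum>v\<in>(\<lambda>(i, j). gen5 a i j) ` gen5_index m n. tscale (u v) v)"
      unfolding S5_eq_span_image using span_finite[of "(\<lambda>(i, j). gen5 a i j) ` gen5_index m n"]
      by auto
    then have "\<psi> = gen5_comb a (\<lambda>i j. if (i, j) \<in> gen5_index m n then u (gen5 a i j) else 0)"
      by (simp add: sum_gen5_image[OF assms])
    moreover have "tsupport (\<lambda>i j. if (i, j) \<in> gen5_index m n then u (gen5 a i j) else 0)
        \<subseteq> gen5_index m n"
      by (auto simp: tsupport_def split: if_splits)
    ultimately show "\<psi> \<in> gen5_comb a ` {L. tsupport L \<subseteq> gen5_index m n}"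
      by blast
  next
    fix \<psi> assume "\<psi> \<in> gen5_comb a ` {L. tsupport L \<subseteq> gen5_index m n}"
    then obtain L where "tsupport L \<subseteq> gen5_index m n" "\<psi> = gen5_comb a L"
      by blast
    then have "\<psi> = (\<Sum>(i, j)\<in>gen5_index m n. tscale (L i j) (gen5 a i j))"
      using gen5_index_subset by (simp add: sum_gen5_eq_gen5_comb)
    also have "\<dots> \<in> S5 m n a"
      unfolding S5_eq_span_image
      by (intro span_sum) (auto intro: span_scale span_base)
    finally show "\<psi> \<in> S5 m n a" .
  qed
qed

lemma dim_S5:
  assumes "3 \<le> a"
  shows "tdim (S5 m n a) = card (gen5_index m n)"
proof -
  interpret vector_space tscale
    by (rule vector_space_tscale)
  define G where "G = (\<lambda>(i, j). gen5 a i j) ` gen5_index m n"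
  have "\<not> dependent G"
  proof
    assume "dependent G"
    moreover have "finite G"
      by (simp add: G_def)
    ultimately obtain u where sum_0: "(\<Sum>v\<in>G. tscale (u v) v) = 0" and "\<exists>v\<in>G. u v \<noteq> 0"
      using dependent_finite by blast
    then obtain i j where ij: "(i, j) \<in> gen5_index m n" "u (gen5 a i j) \<noteq> 0"
      unfolding G_def by (metis (no_types, lifting) case_prod_conv imageE surj_pair)
    define L where "L = (\<lambda>i j. if (i, j) \<in> gen5_index m n then u (gen5 a i j) else 0)"
    have supp: "tsupport L \<subseteq> gen5_index m n"
      by (auto simp: L_def tsupport_def split: if_splits)
    then have "finite (tsupport L)"
      by (rule finite_subset) simp
    moreover have "tsupport L \<subseteq> {2..} \<times> {2..}"
      using supp gen5_index_subset by blast
    moreover have "gen5_comb a L = 0"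
      using sum_0 by (simp add: G_def L_def sum_gen5_image[OF assms])
    ultimately have "L = 0"
      by (rule gen5_comb_eq_0_imp[OF assms])
    then show False
      using ij by (metis L_def zero_fun_apply)
  qed
  then have "tdim (S5 m n a) = card G"
    unfolding S5_eq_span_image G_def[symmetric] by (rule dim_span_eq_card_independent)
  also have "\<dots> = card (gen5_index m n)"
    unfolding G_def using inj_on_gen5[OF assms] gen5_index_subset
    by (intro card_image) (rule inj_on_subset)
  finally show ?thesis .
qed

section \<open>Schmidt rank\<close>

lemma card_le_rank_if_triangular:
  fixes M :: "'b :: linorder \<Rightarrow> 'b \<Rightarrow> 'a :: field" and u v :: "nat \<Rightarrow> 'b \<Rightarrow> 'a"
  assumes "finite A"
    and "\<And>a b. a \<in> A \<Longrightarrow> b \<in> A \<Longrightarrow> a < b \<Longrightarrow> M a b = 0"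
    and "\<And>a. a \<in> A \<Longrightarrow> M a a \<noteq> 0"
    and "\<And>a b. a \<in> A \<Longrightarrow> b \<in> A \<Longrightarrow> M a b = (\<Sum>l<r. u l a * v l b)"
  shows "card A \<le> r"
  using assms
proof (induction r arbitrary: A M u)
  case 0
  then show ?case
    by fastforce
next
  case (Suc r)
  show ?case
  proof (cases "\<forall>a\<in>A. u r a = 0")
    case True
    then have "card A \<le> r"
      using Suc.prems by (intro Suc.IH[of A M u]) auto
    then show ?thesis
      by simp
  next
    case False
    \<comment> \<open>Gaussian elimination: subtract multiples of the row of the first index \<open>a0\<close> on which the
      last rank-one term is nonzero; this kills that term and keeps the matrix triangular.\<close>
    define a0 where "a0 = Min {a \<in> A. u r a \<noteq> 0}"
    have "finite {a \<in> A. u r a \<noteq> 0}" "{a \<in> A. u r a \<noteq> 0} \<noteq> {}"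
      using Suc.prems(1) False by auto
    then have "a0 \<in> A" "u r a0 \<noteq> 0" and before_a0: "\<And>a. a \<in> A \<Longrightarrow> a < a0 \<Longrightarrow> u r a = 0"
      using Min_in Min_le unfolding a0_def by fastforce+
    define c where "c a = u r a / u r a0" for a
    define M' where "M' a b = M a b - c a * M a0 b" for a b
    define u' where "u' l a = u l a - c a * u l a0" for l a
    have "c a = 0 \<or> M a0 b = 0" if "a \<in> A" "b \<in> A" "a < b \<or> a = b" "a \<noteq> a0" "b \<noteq> a0" for a b
      using that before_a0 Suc.prems(2)[OF \<open>a0 \<in> A\<close>] by (cases "a < a0") (auto simp: c_def)
    then have "card (A - {a0}) \<le> r"
    proof (intro Suc.IH[of "A - {a0}" M' u'])
      fix a b assume "a \<in> A - {a0}" "b \<in> A - {a0}"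
      have "M' a b = (\<Sum>l<Suc r. u l a * v l b) - c a * (\<Sum>l<Suc r. u l a0 * v l b)"
        using Suc.prems(4) \<open>a \<in> A - {a0}\<close> \<open>b \<in> A - {a0}\<close> \<open>a0 \<in> A\<close> by (simp add: M'_def)
      also have "\<dots> = (\<Sum>l<r. u' l a * v l b) + (u r a - c a * u r a0) * v r b"
        by (simp add: u'_def sum_distrib_left sum_subtractf algebra_simps)
      finally show "M' a b = (\<Sum>l<r. u' l a * v l b)"
        using \<open>u r a0 \<noteq> 0\<close> by (simp add: c_def)
    qed (use Suc.prems in \<open>fastforce simp: M'_def\<close>)+
    moreover have "card A = Suc (card (A - {a0}))"
      using Suc.prems(1) \<open>a0 \<in> A\<close> by (rule card_Suc_Diff1[symmetric])
    ultimately show ?thesis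
      by simp
  qed
qed

lemma schmidt_rank_decomposition:
  obtains u v where
    "\<And>i j. i < m \<Longrightarrow> j < n \<Longrightarrow> \<psi> i j = (\<Sum>l<schmidt_rank m n \<psi>. u l i * v l j)"
proof -
  have "\<forall>i<m. \<forall>j<n. \<psi> i j = (\<Sum>l<m. (if l = i then 1 else 0) * \<psi> l j)"
    by (simp add: if_distrib[of "\<lambda>z. z * _"] cong: if_cong)
  then have "\<exists>r::nat. \<exists>u v. \<forall>i<m. \<forall>j<n. \<psi> i j = (\<Sum>l<r. u l i * v l j)"
    by fast
  from LeastI_ex[OF this] show ?thesis
    using that unfolding schmidt_rank_def by blast
qed

lemma gen5_comb_nonzero_in_box:
  assumes "tsupport L \<subseteq> gen5_index m n" "gen5_comb a L x y \<noteq> 0"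
  shows "x < m \<and> y < n"
proof -
  have box: "2 \<le> i \<and> i \<le> m - 2 \<and> 2 \<le> j \<and> j \<le> n - 2" if "L i j \<noteq> 0" for i j
    using assms(1) that by (auto simp: tsupport_def gen5_index_def)
  have "L (x + 2) (y - 1) \<noteq> 0 \<or> L (x + 1) y \<noteq> 0 \<or> L x (y + 1) \<noteq> 0 \<or> L (x - 1) (y + 2) \<noteq> 0"
    using assms(2) by (auto simp: gen5_comb_def)
  then show ?thesis
    by (elim disjE) (drule box, arith)+
qed

lemma schmidt_rank_gen5_comb_gt_3:
  assumes "3 \<le> a" "tsupport L \<subseteq> gen5_index m n" "L \<noteq> 0"
  shows "3 < schmidt_rank m n (gen5_comb a L)"
proof -
  define \<psi> where "\<psi> = gen5_comb a L"
  have "finite (tsupport L)"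
    using assms(2) by (rule finite_subset) simp
  moreover have "tsupport L \<subseteq> {2..} \<times> {2..}"
    using assms(2) gen5_index_subset by blast
  ultimately obtain d where below: "\<And>x y. x + y < d \<Longrightarrow> \<psi> x y = 0"
    and card_A: "3 < card {x. x \<le> d \<and> \<psi> x (d - x) \<noteq> 0}"
    using gen5_comb_antidiagonal[OF assms(1) _ _ assms(3)] unfolding \<psi>_def by blast
  obtain u v where uv: "\<And>i j. i < m \<Longrightarrow> j < n \<Longrightarrow> \<psi> i j = (\<Sum>l<schmidt_rank m n \<psi>. u l i * v l j)"
    using schmidt_rank_decomposition by blast
  \<comment> \<open>On the antidiagonal entries, \<open>\<psi>\<close> restricted to rows \<open>x\<close> and columns \<open>d - y\<close> is triangular.\<close>
  have "card {x. x \<le> d \<and> \<psi> x (d - x) \<noteq> 0} \<le> schmidt_rank m n \<psi>"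
  proof (rule card_le_rank_if_triangular[where M = "\<lambda>x y. \<psi> x (d - y)" and u = u
        and v = "\<lambda>l y. v l (d - y)"])
    fix x y assume "x \<in> {x. x \<le> d \<and> \<psi> x (d - x) \<noteq> 0}" "y \<in> {x. x \<le> d \<and> \<psi> x (d - x) \<noteq> 0}"
    then have "x < m" "d - y < n"
      using gen5_comb_nonzero_in_box[OF assms(2)] unfolding \<psi>_def by blast+
    then show "\<psi> x (d - y) = (\<Sum>l<schmidt_rank m n \<psi>. u l x * v l (d - y))"
      by (rule uv)
  qed (use below in auto)
  then show ?thesis
    using card_A by (simp add: \<psi>_def)
qed

theorem theorem5p5:
  fixes m n :: nat and a :: real
  assumes "min m n \<ge> 4" and "a = 3 \<or> a > 5"
  shows "(\<forall>\<psi>\<in>S5 m n a. \<psi> \<noteq> 0 \<longrightarrow> \<not> schmidt_rank m n \<psi> \<le> 3)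
         \<and> tdim (S5 m n a) = (m - 3) * (n - 3)"
proof
  have "3 \<le> a"
    using assms(2) by auto
  show "\<forall>\<psi>\<in>S5 m n a. \<psi> \<noteq> 0 \<longrightarrow> \<not> schmidt_rank m n \<psi> \<le> 3"
    using schmidt_rank_gen5_comb_gt_3[OF \<open>3 \<le> a\<close>]
    by (fastforce simp: S5_eq_image_gen5_comb[OF \<open>3 \<le> a\<close>])
  show "tdim (S5 m n a) = (m - 3) * (n - 3)"
    by (simp add: dim_S5[OF \<open>3 \<le> a\<close>] gen5_index_def)
qed

end
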